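(* Let $\beta_U,\beta_H,\beta_R\ge 0$ with $\beta_U>0$, $\beta_H+\beta_R>0$ and $\beta_U+\beta_H+\beta_R=1$, and let $\gamma\in[0,1]$. For $x\in[0,1]$ put $p(x)=\beta_U+x\beta_R$ and $$E[R_r](x)=\frac{\beta_R}{\beta_R+\beta_H}\,(1-p(x))+\frac{(1-x)\beta_R}{\beta_H+(1-x)\beta_R}\,(1-p(x))\,\gamma+\frac{x\beta_R}{x\beta_R+\beta_U}\,p(x),$$ where any term whose denominator is $0$ is read as $0$. Then for all $x\in[0,1]$, $$E[R_r](x)=\beta_R\Big(1+\gamma+\Big(\frac{\beta_H}{\beta_H+\beta_R}-\gamma\Big)x\Big).$$ In particular, when $\beta_R>0$, the maximum of $E[R_r]$ over $x\in[0,1]$ is attained only at $x=1$ if $\gamma<\frac{\beta_H}{1-\beta_U}$, and only at $x=0$ if $\gamma>\frac{\beta_H}{1-\beta_U}$.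
   Context: Model of an undercutting attack with safe depth $D=1$ (the undercutter abandons its fork once it is one block behind). Miners are split into an undercutter with mining-power fraction $\beta_U$, honest miners with total fraction $\beta_H$, and the remaining rational (non-undercutting) miners with total fraction $\beta_R$. Fees are normalized so the main-chain block being undercut holds fee $1$, the next main-chain block and the undercutter's first fork block each hold $\gamma$, and the second fork block holds $1$. A fraction $x$ of the rational mining power moves to the fork after the fork and the main chain tie at one block each; $p(x)$ is the probability that the fork wins. $E[R_r](x)$ is the rational miners' expected fee revenue. *)

theory Defs
  imports Complex_Main
begin

text \<open>Probability that the fork wins, when a fraction x of rational power moves to the fork.\<close>
definition p_fork :: "real \<Rightarrow> real \<Rightarrow> real \<Rightarrow> real" where
  "p_fork bU bR x = bU + x * bR"

text \<open>Expected fee revenue of rational miners. Division by zero yields 0 in Isabelle/HOL,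
  which matches the convention that a term with zero denominator is read as 0.\<close>
definition ER_r :: "real \<Rightarrow> real \<Rightarrow> real \<Rightarrow> real \<Rightarrow> real \<Rightarrow> real" where
  "ER_r bU bH bR \<gamma> x =
     bR / (bR + bH) * (1 - p_fork bU bR x)
   + ((1 - x) * bR) / (bH + (1 - x) * bR) * (1 - p_fork bU bR x) * \<gamma>
   + (x * bR) / (x * bR + bU) * p_fork bU bR x"

end

theory Submission
  imports Defs
begin

text \<open>With \<open>1 - p(x) = \<beta>\<^sub>H + (1 - x)\<beta>\<^sub>R\<close>, the second and third terms of \<open>E[R\<^sub>r](x)\<close> collapse to
  \<open>(1 - x)\<beta>\<^sub>R\<gamma>\<close> and \<open>x\<beta>\<^sub>R\<close>, so the revenue is affine in \<open>x\<close> with slope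
  \<open>\<beta>\<^sub>R(\<beta>\<^sub>H/(\<beta>\<^sub>H + \<beta>\<^sub>R) - \<gamma>)\<close>; an affine function with nonzero slope is maximised on
  \<open>[0,1]\<close> exactly at the endpoint its slope points to.\<close>

definition maximizers_on :: "'a set \<Rightarrow> ('a \<Rightarrow> 'b::order) \<Rightarrow> 'a set" where
  "maximizers_on S f = {y \<in> S. \<forall>x\<in>S. f x \<le> f y}"

lemma maximizers_on_affine_pos:
  fixes f :: "real \<Rightarrow> real"
  assumes "l \<le> u" "b > 0" "\<forall>x\<in>{l..u}. f x = a + b * x"
  shows "maximizers_on {l..u} f = {u}"
proof (rule set_eqI, rule iffI)
  fix y assume "y \<in> maximizers_on {l..u} f"
  then have "y \<in> {l..u}" "f u \<le> f y"
    using \<open>l \<le> u\<close> unfolding maximizers_on_def by auto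
  then show "y \<in> {u}" using assms by auto
next
  fix y assume "y \<in> {u}"
  then show "y \<in> maximizers_on {l..u} f"
    using assms unfolding maximizers_on_def by auto
qed

lemma maximizers_on_affine_neg:
  fixes f :: "real \<Rightarrow> real"
  assumes "l \<le> u" "b < 0" "\<forall>x\<in>{l..u}. f x = a + b * x"
  shows "maximizers_on {l..u} f = {l}"
proof (rule set_eqI, rule iffI)
  fix y assume "y \<in> maximizers_on {l..u} f"
  then have "y \<in> {l..u}" "f l \<le> f y"
    using \<open>l \<le> u\<close> unfolding maximizers_on_def by auto
  then show "y \<in> {l}" using assms by (auto simp: mult_le_cancel_left)
next
  fix y assume "y \<in> {l}"
  then show "y \<in> maximizers_on {l..u} f"
    using assms unfolding maximizers_on_def by (auto simp: mult_le_cancel_left)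
qed

lemma ER_r_affine:
  fixes bU bH bR \<gamma> x :: real
  assumes "bH \<ge> 0" "bR \<ge> 0" "bU > 0" "bH + bR > 0" "bU + bH + bR = 1"
    and "0 \<le> x" "x \<le> 1"
  shows "ER_r bU bH bR \<gamma> x = bR * (1 + \<gamma> + (bH / (bH + bR) - \<gamma>) * x)"
proof -
  have lose: "1 - p_fork bU bR x = bH + (1 - x) * bR"
    using assms unfolding p_fork_def by (simp add: algebra_simps)
  have "(1 - x) * bR \<ge> 0" using assms by simp
  then have "bH + (1 - x) * bR = 0 \<Longrightarrow> (1 - x) * bR = 0" using assms by linarith
  then have second: "(1 - x) * bR / (bH + (1 - x) * bR) * (bH + (1 - x) * bR) = (1 - x) * bR"
    by (cases "bH + (1 - x) * bR = 0") auto
  have "x * bR + bU > 0" using assms by (simp add: add_nonneg_pos)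
  then have third: "x * bR / (x * bR + bU) * p_fork bU bR x = x * bR"
    unfolding p_fork_def by (simp add: add.commute)
  have "ER_r bU bH bR \<gamma> x = bR / (bR + bH) * (bH + (1 - x) * bR) + (1 - x) * bR * \<gamma> + x * bR"
    unfolding ER_r_def lose third using second by (simp add: mult.commute mult.left_commute)
  also have "\<dots> = bR * (1 + \<gamma> + (bH / (bH + bR) - \<gamma>) * x)"
    using assms by (simp add: field_simps add.commute)
  finally show ?thesis .
qed

theorem mainTheorem1:
  fixes bU bH bR \<gamma> :: real
  assumes "bU \<ge> 0" "bH \<ge> 0" "bR \<ge> 0" "bU > 0" "bH + bR > 0" "bU + bH + bR = 1"
    and "0 \<le> \<gamma>" "\<gamma> \<le> 1"
  shows "(\<forall>x\<in>{0..1}. ER_r bU bH bR \<gamma> x = bR * (1 + \<gamma> + (bH / (bH + bR) - \<gamma>) * x))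
       \<and> (bR > 0 \<longrightarrow>
            (\<gamma> < bH / (1 - bU) \<longrightarrow>
               {y\<in>{0..1}. \<forall>x\<in>{0..1}. ER_r bU bH bR \<gamma> x \<le> ER_r bU bH bR \<gamma> y} = {1})
          \<and> (\<gamma> > bH / (1 - bU) \<longrightarrow>
               {y\<in>{0..1}. \<forall>x\<in>{0..1}. ER_r bU bH bR \<gamma> x \<le> ER_r bU bH bR \<gamma> y} = {0}))"
proof -
  define slope where "slope = bR * (bH / (bH + bR) - \<gamma>)"
  have closed_form: "\<forall>x\<in>{0..1}. ER_r bU bH bR \<gamma> x = bR * (1 + \<gamma> + (bH / (bH + bR) - \<gamma>) * x)"
    using ER_r_affine assms by simp
  then have affine: "\<forall>x\<in>{0..1}. ER_r bU bH bR \<gamma> x = bR * (1 + \<gamma>) + slope * x"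
    unfolding slope_def by (simp add: algebra_simps)
  have "1 - bU = bH + bR" using assms by linarith
  then have "bR > 0 \<Longrightarrow> \<gamma> < bH / (1 - bU) \<Longrightarrow> slope > 0"
    and "bR > 0 \<Longrightarrow> \<gamma> > bH / (1 - bU) \<Longrightarrow> slope < 0"
    unfolding slope_def by (simp_all add: mult_pos_neg)
  with affine maximizers_on_affine_pos[of 0 1] maximizers_on_affine_neg[of 0 1]
  show ?thesis
    using closed_form unfolding maximizers_on_def by auto
qed

end
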